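(* Let $\varphi:\mathbb{R}\to\mathbb{R}$ be a diffeomorphism with at most quadratic growth, and let $\Sigma$ be a properly immersed $[\varphi,\vec e_3]$-minimal surface in $\mathbb{R}^3$ such that $|\dot\varphi(\mu(p))|>\xi$ for all $p$ outside a compact subset of $\Sigma$, for some constant $\xi>0$. Then, for every vector $\vec v\in\mathbb{R}^3$ with $\langle \vec v,\vec e_3\rangle>0$, $\Sigma$ is not contained in the closed half-space $\mathcal{H}^{\varphi}_{\vec v}=\{x\in\mathbb{R}^3:\ \operatorname{sgn}(\dot\varphi)\langle x,\vec v\rangle\le 0\}$.
   Context: Surfaces are connected, orientable, immersed in $\mathbb{R}^3$, without boundary, with unit normal $N$; $\{\vec e_1,\vec e_2,\vec e_3\}$ is the standard basis. For a surface $\Sigma$, $\mu(p)=\langle p,\vec e_3\rangle$ is the height function and $\eta=\langle N,\vec e_3\rangle$ the angle function. Given a smooth $\varphi:\mathbb{R}\to\mathbb{R}$, $\Sigma$ is called $[\varphi,\vec e_3]$-minimal if its mean curvature vector $\vec H$ (trace of the second fundamental form, equal to the Laplacian of the position vector) satisfies $\vec H=\dot\varphi(\mu)\,\eta\,N$; equivalently, writing $\vec H=-HN$, $H=-\dot\varphi(\mu)\eta$ (these are the critical points of the weighted area $\int_\Sigma e^{\varphi(\mu)}\,d\Sigma$). Since $\varphi$ is a diffeomorphism, $\dot\varphi$ never vanishes and has a constant sign $\operatorname{sgn}(\dot\varphi)\in\{1,-1\}$. "At most quadratic growth" means there is $C>0$ with $|\dot\varphi(t)|\le C(1+|t|)$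 for all $t\in\mathbb{R}$. Proper means the immersion is a proper map. *)

theory Defs
  imports "HOL-Analysis.Analysis"
begin

primrec Ck_on :: "nat \<Rightarrow> 'a::euclidean_space set \<Rightarrow> ('a \<Rightarrow> 'b::real_normed_vector) \<Rightarrow> bool" where
  "Ck_on 0 U f = continuous_on U f"
| "Ck_on (Suc k) U f = (f differentiable_on U \<and>
      (\<forall>i\<in>Basis. Ck_on k U (\<lambda>x. frechet_derivative f (at x) i)))"

definition smooth_on :: "'a::euclidean_space set \<Rightarrow> ('a \<Rightarrow> 'b::real_normed_vector) \<Rightarrow> bool" where
  "smooth_on U f \<longleftrightarrow> open U \<and> (\<forall>k. Ck_on k U f)"

definition diffeomorphism_R :: "(real \<Rightarrow> real) \<Rightarrow> bool" where
  "diffeomorphism_R \<phi> \<longleftrightarrow> bij \<phi> \<and> smooth_on UNIV \<phi> \<and> smooth_on UNIV (inv \<phi>)"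

definition at_most_quadratic_growth :: "(real \<Rightarrow> real) \<Rightarrow> bool" where
  "at_most_quadratic_growth \<phi> \<longleftrightarrow> (\<exists>C>0. \<forall>t. \<bar>deriv \<phi> t\<bar> \<le> C * (1 + \<bar>t\<bar>))"

definition pd :: "(real^2 \<Rightarrow> real^3) \<Rightarrow> 2 \<Rightarrow> real^2 \<Rightarrow> real^3" where
  "pd Y i u = frechet_derivative Y (at u) (axis i 1)"

definition pd2 :: "(real^2 \<Rightarrow> real^3) \<Rightarrow> 2 \<Rightarrow> 2 \<Rightarrow> real^2 \<Rightarrow> real^3" where
  "pd2 Y i j u = frechet_derivative (pd Y i) (at u) (axis j 1)"

text \<open>Trace of the (scalar) second fundamental form w.r.t. the normal n, in local coordinates:
  (h11 g22 - 2 h12 g12 + h22 g11) / (g11 g22 - g12^2), so that the mean curvature vector is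
  this quantity times n.\<close>
definition mean_curv_trace :: "(real^2 \<Rightarrow> real^3) \<Rightarrow> real^3 \<Rightarrow> real^2 \<Rightarrow> real" where
  "mean_curv_trace Y n u =
     (let g11 = pd Y 1 u \<bullet> pd Y 1 u; g12 = pd Y 1 u \<bullet> pd Y 2 u; g22 = pd Y 2 u \<bullet> pd Y 2 u;
          h11 = pd2 Y 1 1 u \<bullet> n; h12 = pd2 Y 1 2 u \<bullet> n; h22 = pd2 Y 2 2 u \<bullet> n
      in (h11 * g22 - 2 * h12 * g12 + h22 * g11) / (g11 * g22 - g12 ^ 2))"

definition local_param :: "'m topology \<Rightarrow> ('m \<Rightarrow> real^3) \<Rightarrow> (real^2) set \<Rightarrow> (real^2 \<Rightarrow> 'm) \<Rightarrow> bool" where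
  "local_param M X U \<psi> \<longleftrightarrow> open U \<and> openin M (\<psi> ` U) \<and>
     homeomorphic_map (top_of_set U) (subtopology M (\<psi> ` U)) \<psi> \<and>
     smooth_on U (X \<circ> \<psi>) \<and>
     (\<forall>u\<in>U. inj (frechet_derivative (X \<circ> \<psi>) (at u)))"

definition oriented_immersed_surface :: "'m topology \<Rightarrow> ('m \<Rightarrow> real^3) \<Rightarrow> ('m \<Rightarrow> real^3) \<Rightarrow> bool" where
  "oriented_immersed_surface M X N \<longleftrightarrow>
     topspace M \<noteq> {} \<and> connected_space M \<and> Hausdorff_space M \<and> second_countable M \<and>
     (\<forall>p\<in>topspace M. \<exists>U \<psi>. local_param M X U \<psi> \<and> p \<in> \<psi> ` U) \<and>
     continuous_map M euclidean N \<and>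
     (\<forall>p\<in>topspace M. norm (N p) = 1) \<and>
     (\<forall>U \<psi>. local_param M X U \<psi> \<longrightarrow>
        (\<forall>u\<in>U. \<forall>i. pd (X \<circ> \<psi>) i u \<bullet> N (\<psi> u) = 0))"

definition height :: "real^3 \<Rightarrow> real" where
  "height x = x \<bullet> axis 3 1"

definition phi_minimal :: "(real \<Rightarrow> real) \<Rightarrow> 'm topology \<Rightarrow> ('m \<Rightarrow> real^3) \<Rightarrow> ('m \<Rightarrow> real^3) \<Rightarrow> bool" where
  "phi_minimal \<phi> M X N \<longleftrightarrow> oriented_immersed_surface M X N \<and>
     (\<forall>U \<psi>. local_param M X U \<psi> \<longrightarrow>
        (\<forall>u\<in>U. mean_curv_trace (X \<circ> \<psi>) (N (\<psi> u)) u
                 = deriv \<phi> (height (X (\<psi> u))) * (N (\<psi> u) \<bullet> axis 3 1)))"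

definition proper_immersion :: "'m topology \<Rightarrow> ('m \<Rightarrow> real^3) \<Rightarrow> bool" where
  "proper_immersion M X \<longleftrightarrow>
     (\<forall>K. compact K \<longrightarrow> compactin M {p \<in> topspace M. X p \<in> K})"

end

theory Submission
  imports Defs "HOL-Analysis.Cross3"
begin

text \<open>Suppose the surface lies in the half-space, let s = sgn phi' and, for small epsilon > 0,
  G(x) = s <x, v> - epsilon ln (1 + |x|^2). On the surface G <= - epsilon ln (1 + |X|^2), so by
  properness G o X attains a maximum at some point p. There the gradient z of G is normal,
  z = lambda N, and the second order condition gives lambda H <= 4 epsilon with H = phi'(mu) eta.
  Since lambda eta = <z, e3> = s <v, e3> - 2 epsilon mu / (1 + |X|^2), this reads
  |phi'(mu)| <v, e3> <= 4 epsilon + 2 epsilon phi'(mu) mu / (1 + |X|^2) <= (4 + 3 C) epsilon by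
  the growth bound |phi'(t)| <= C (1 + |t|). But |phi'(mu)| is bounded below by some m > 0 on the
  whole surface, so epsilon = m <v, e3> / (2 (4 + 3 C)) gives a contradiction.\<close>

lemma DERIV_local_max_second_order:
  fixes h h' :: "real \<Rightarrow> real"
  assumes "d > 0"
    and h: "\<And>t. \<bar>t\<bar> < d \<Longrightarrow> (h has_real_derivative h' t) (at t)"
    and max: "\<And>t. \<bar>t\<bar> < d \<Longrightarrow> h t \<le> h 0"
    and h': "(h' has_real_derivative c) (at 0)"
  shows "h' 0 = 0" and "c \<le> 0"
proof -
  show h'0: "h' 0 = 0"
    using DERIV_local_max[OF h[of 0] \<open>d > 0\<close>] max \<open>d > 0\<close>
    by (auto simp: dist_real_def abs_minus_commute)
  show "c \<le> 0"
  proof (rule ccontr)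
    assume "\<not> c \<le> 0"
    have "((\<lambda>t. h' t / t) \<longlongrightarrow> c) (at_right 0)"
      using h' h'0 unfolding DERIV_def by (simp add: filterlim_at_split)
    hence "eventually (\<lambda>t. h' t / t > 0) (at_right 0)"
      using \<open>\<not> c \<le> 0\<close> by (intro order_tendstoD) auto
    then obtain e where "e > 0" and e: "\<And>t. 0 < t \<Longrightarrow> t < e \<Longrightarrow> h' t / t > 0"
      by (auto simp: eventually_at_right_field)
    define t where "t = min e d / 2"
    have t: "0 < t" "t < e" "t < d" using \<open>e > 0\<close> \<open>d > 0\<close> by (auto simp: t_def)
    have "\<And>x. 0 \<le> x \<Longrightarrow> x \<le> t \<Longrightarrow> (h has_real_derivative h' x) (at x)"
      using t by (intro h) auto
    from MVT2[OF t(1) this] obtain z where z: "0 < z" "z < t" "h t - h 0 = t * h' z"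
      by auto
    have "h' z > 0" using e[of z] z t by (simp add: zero_less_divide_iff)
    hence "h t > h 0" using z t mult_pos_pos[of t "h' z"] by linarith
    with max[of t] t show False by simp
  qed
qed

text \<open>Schwarz's theorem on mixed partial derivatives, via the mean value theorem applied twice
  to the second difference over a small rectangle.\<close>

lemma second_difference_mean_value:
  fixes f P Q :: "'a::real_normed_vector \<Rightarrow> real"
  assumes "h > 0"
    and rect: "\<And>s t. 0 \<le> s \<Longrightarrow> s \<le> h \<Longrightarrow> 0 \<le> t \<Longrightarrow> t \<le> h \<Longrightarrow> x + s *\<^sub>R a + t *\<^sub>R b \<in> U"
    and f: "\<And>u t. u + t *\<^sub>R a \<in> U \<Longrightarrow>
              ((\<lambda>s. f (u + s *\<^sub>R a)) has_real_derivative P (u + t *\<^sub>R a)) (at t)"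
    and P: "\<And>u t. u + t *\<^sub>R b \<in> U \<Longrightarrow>
              ((\<lambda>s. P (u + s *\<^sub>R b)) has_real_derivative Q (u + t *\<^sub>R b)) (at t)"
  obtains s t where "0 < s" "s < h" "0 < t" "t < h"
    "f (x + h *\<^sub>R a + h *\<^sub>R b) - f (x + h *\<^sub>R b) - f (x + h *\<^sub>R a) + f x
       = h * h * Q (x + s *\<^sub>R a + t *\<^sub>R b)"
proof -
  define g where "g \<sigma> = f (x + h *\<^sub>R b + \<sigma> *\<^sub>R a) - f (x + \<sigma> *\<^sub>R a)" for \<sigma>
  have "(g has_real_derivative P (x + h *\<^sub>R b + \<sigma> *\<^sub>R a) - P (x + \<sigma> *\<^sub>R a)) (at \<sigma>)"
    if "0 \<le> \<sigma>" "\<sigma> \<le> h" for \<sigma>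
    unfolding g_def using rect[of \<sigma> h] rect[of \<sigma> 0] that \<open>h > 0\<close>
    by (intro DERIV_diff f) (auto simp: algebra_simps)
  from MVT2[OF \<open>h > 0\<close> this] obtain s where s: "0 < s" "s < h"
    "g h - g 0 = h * (P (x + h *\<^sub>R b + s *\<^sub>R a) - P (x + s *\<^sub>R a))"
    by auto
  have "((\<lambda>\<tau>. P (x + s *\<^sub>R a + \<tau> *\<^sub>R b)) has_real_derivative Q (x + s *\<^sub>R a + \<tau> *\<^sub>R b)) (at \<tau>)"
    if "0 \<le> \<tau>" "\<tau> \<le> h" for \<tau>
    using rect[of s \<tau>] s that by (intro P) auto
  from MVT2[OF \<open>h > 0\<close> this] obtain t where t: "0 < t" "t < h"
    "P (x + s *\<^sub>R a + h *\<^sub>R b) - P (x + s *\<^sub>R a + 0 *\<^sub>R b) = h * Q (x + s *\<^sub>R a + t *\<^sub>R b)"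
    by auto
  have "f (x + h *\<^sub>R a + h *\<^sub>R b) - f (x + h *\<^sub>R b) - f (x + h *\<^sub>R a) + f x = g h - g 0"
    by (simp add: g_def algebra_simps)
  also have "\<dots> = h * h * Q (x + s *\<^sub>R a + t *\<^sub>R b)"
    using s(3) t(3) by (simp add: algebra_simps)
  finally show ?thesis using that s t by blast
qed

lemma small_parallelogram_near:
  fixes x a b :: "'a::real_normed_vector"
  assumes "\<delta> > 0"
  obtains h where "h > 0"
    "\<And>s t. 0 \<le> s \<Longrightarrow> s \<le> h \<Longrightarrow> 0 \<le> t \<Longrightarrow> t \<le> h \<Longrightarrow> dist (x + s *\<^sub>R a + t *\<^sub>R b) x < \<delta>"
proof -
  define E where "E = norm a + norm b + 1"
  define h where "h = \<delta> / (2 * E)"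
  have "E > 0" unfolding E_def using norm_ge_zero[of a] norm_ge_zero[of b] by linarith
  then have "h > 0" using \<open>\<delta> > 0\<close> by (simp add: h_def)
  moreover have "dist (x + s *\<^sub>R a + t *\<^sub>R b) x < \<delta>"
    if "0 \<le> s" "s \<le> h" "0 \<le> t" "t \<le> h" for s t
  proof -
    have "dist (x + s *\<^sub>R a + t *\<^sub>R b) x \<le> s * norm a + t * norm b"
      using that norm_triangle_ineq[of "s *\<^sub>R a" "t *\<^sub>R b"] by (simp add: dist_norm)
    also have "\<dots> \<le> h * (norm a + norm b)"
      using that by (simp add: distrib_left add_mono mult_right_mono)
    also have "\<dots> < h * E"
      using \<open>h > 0\<close> by (simp add: E_def)
    also have "\<dots> < \<delta>"
      using \<open>\<delta> > 0\<close> \<open>E > 0\<close> by (simp add: h_def)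
    finally show ?thesis .
  qed
  ultimately show ?thesis using that by blast
qed

lemma mixed_partials_eq:
  fixes f Pa Pb Qab Qba :: "'a::real_normed_vector \<Rightarrow> real"
  assumes "open U" "x \<in> U"
    and fa: "\<And>u t. u + t *\<^sub>R a \<in> U \<Longrightarrow>
              ((\<lambda>s. f (u + s *\<^sub>R a)) has_real_derivative Pa (u + t *\<^sub>R a)) (at t)"
    and fb: "\<And>u t. u + t *\<^sub>R b \<in> U \<Longrightarrow>
              ((\<lambda>s. f (u + s *\<^sub>R b)) has_real_derivative Pb (u + t *\<^sub>R b)) (at t)"
    and Pab: "\<And>u t. u + t *\<^sub>R b \<in> U \<Longrightarrow>
              ((\<lambda>s. Pa (u + s *\<^sub>R b)) has_real_derivative Qab (u + t *\<^sub>R b)) (at t)"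
    and Pba: "\<And>u t. u + t *\<^sub>R a \<in> U \<Longrightarrow>
              ((\<lambda>s. Pb (u + s *\<^sub>R a)) has_real_derivative Qba (u + t *\<^sub>R a)) (at t)"
    and "isCont Qab x" "isCont Qba x"
  shows "Qab x = Qba x"
proof (rule ccontr)
  assume "Qab x \<noteq> Qba x"
  define e where "e = \<bar>Qab x - Qba x\<bar> / 2"
  have "e > 0" using \<open>Qab x \<noteq> Qba x\<close> by (simp add: e_def)
  obtain r where "r > 0" "ball x r \<subseteq> U" using assms(1,2) open_contains_ball by blast
  obtain \<delta>a where "\<delta>a > 0" and \<delta>a: "\<And>y. dist y x < \<delta>a \<Longrightarrow> \<bar>Qab y - Qab x\<bar> < e"
    using \<open>isCont Qab x\<close> \<open>e > 0\<close> unfolding continuous_at_eps_delta dist_real_def by metis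
  obtain \<delta>b where "\<delta>b > 0" and \<delta>b: "\<And>y. dist y x < \<delta>b \<Longrightarrow> \<bar>Qba y - Qba x\<bar> < e"
    using \<open>isCont Qba x\<close> \<open>e > 0\<close> unfolding continuous_at_eps_delta dist_real_def by metis
  have "min r (min \<delta>a \<delta>b) > 0" using \<open>r > 0\<close> \<open>\<delta>a > 0\<close> \<open>\<delta>b > 0\<close> by simp
  then obtain h where "h > 0" and near: "\<And>s t. 0 \<le> s \<Longrightarrow> s \<le> h \<Longrightarrow> 0 \<le> t \<Longrightarrow> t \<le> h \<Longrightarrow>
      dist (x + s *\<^sub>R a + t *\<^sub>R b) x < min r (min \<delta>a \<delta>b)"
    using small_parallelogram_near[where x = x and a = a and b = b] by blast
  have rect: "x + s *\<^sub>R a + t *\<^sub>R b \<in> U" and rect': "x + t *\<^sub>R b + s *\<^sub>R a \<in> U"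
    if "0 \<le> s" "s \<le> h" "0 \<le> t" "t \<le> h" for s t
    using near[OF that] \<open>ball x r \<subseteq> U\<close> by (auto simp: dist_commute add.commute add.left_commute)
  obtain s t where st: "0 < s" "s < h" "0 < t" "t < h"
    "f (x + h *\<^sub>R a + h *\<^sub>R b) - f (x + h *\<^sub>R b) - f (x + h *\<^sub>R a) + f x
       = h * h * Qab (x + s *\<^sub>R a + t *\<^sub>R b)"
    using second_difference_mean_value[OF \<open>h > 0\<close> rect fa Pab] by blast
  obtain t' s' where st': "0 < t'" "t' < h" "0 < s'" "s' < h"
    "f (x + h *\<^sub>R b + h *\<^sub>R a) - f (x + h *\<^sub>R a) - f (x + h *\<^sub>R b) + f x
       = h * h * Qba (x + t' *\<^sub>R b + s' *\<^sub>R a)"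
    using second_difference_mean_value[OF \<open>h > 0\<close> rect' fb Pba] by blast
  have "Qab (x + s *\<^sub>R a + t *\<^sub>R b) = Qba (x + s' *\<^sub>R a + t' *\<^sub>R b)"
    using st(5) st'(5) \<open>h > 0\<close> by (simp add: algebra_simps)
  moreover have "\<bar>Qab (x + s *\<^sub>R a + t *\<^sub>R b) - Qab x\<bar> < e"
    using \<delta>a near[of s t] st by simp
  moreover have "\<bar>Qba (x + s' *\<^sub>R a + t' *\<^sub>R b) - Qba x\<bar> < e"
    using \<delta>b near[of s' t'] st' by simp
  ultimately show False unfolding e_def by (simp add: abs_if split: if_split_asm)
qed

lemma has_real_derivative_inner:
  fixes f g :: "real \<Rightarrow> 'a::real_inner"
  assumes "(f has_vector_derivative f') (at t)" "(g has_vector_derivative g') (at t)"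
  shows "((\<lambda>t. f t \<bullet> g t) has_real_derivative f' \<bullet> g t + f t \<bullet> g') (at t)"
  using bounded_bilinear.has_vector_derivative[OF bounded_bilinear_inner assms]
  by (simp add: has_real_derivative_iff_has_vector_derivative add.commute)

lemma has_vector_derivative_along_line:
  assumes "(F has_derivative F') (at (u + t *\<^sub>R w))"
  shows "((\<lambda>s. F (u + s *\<^sub>R w)) has_vector_derivative F' w) (at t)"
proof -
  have "((\<lambda>s. u + s *\<^sub>R w) has_derivative (\<lambda>s. s *\<^sub>R w)) (at t)"
    by (auto intro!: derivative_eq_intros)
  from diff_chain_at[OF this assms] show ?thesis
    using linear_scale[OF has_derivative_linear[OF assms]]
    by (simp add: has_vector_derivative_def o_def)
qed

lemma linear_vec2_expansion:
  assumes "linear L"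
  shows "L (w::real^2) = w$1 *\<^sub>R L (axis 1 1) + w$2 *\<^sub>R L (axis 2 1)"
proof -
  have "w = w$1 *\<^sub>R axis 1 1 + w$2 *\<^sub>R axis 2 1"
    by (simp add: vec_eq_iff forall_2 axis_def)
  then have "L w = L (w$1 *\<^sub>R axis 1 1 + w$2 *\<^sub>R axis 2 1)" by simp
  also have "\<dots> = w$1 *\<^sub>R L (axis 1 1) + w$2 *\<^sub>R L (axis 2 1)"
    using assms by (simp add: linear_add linear_scale)
  finally show ?thesis .
qed

lemma has_vector_derivative_line_pd:
  fixes Y :: "real^2 \<Rightarrow> real^3"
  assumes "(Y has_derivative frechet_derivative Y (at (u + t *\<^sub>R w))) (at (u + t *\<^sub>R w))"
  shows "((\<lambda>s. Y (u + s *\<^sub>R w)) has_vector_derivative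
           w$1 *\<^sub>R pd Y 1 (u + t *\<^sub>R w) + w$2 *\<^sub>R pd Y 2 (u + t *\<^sub>R w)) (at t)"
proof -
  have "frechet_derivative Y (at (u + t *\<^sub>R w)) w
      = w$1 *\<^sub>R pd Y 1 (u + t *\<^sub>R w) + w$2 *\<^sub>R pd Y 2 (u + t *\<^sub>R w)"
    unfolding pd_def by (rule linear_vec2_expansion[OF has_derivative_linear[OF assms]])
  then show ?thesis using has_vector_derivative_along_line[OF assms] by simp
qed

lemma pd2_eq_pd_pd: "pd2 Y i j = pd (pd Y i) j"
  by (simp add: fun_eq_iff pd_def pd2_def)

lemma open_contains_line_segment:
  fixes u w :: "'a::real_normed_vector"
  assumes "open U" "u \<in> U"
  obtains d where "d > 0" "\<And>t. \<bar>t\<bar> < d \<Longrightarrow> u + t *\<^sub>R w \<in> U"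
proof -
  obtain r where "r > 0" "ball u r \<subseteq> U" using assms open_contains_ball by blast
  have "norm w + 1 > 0" using norm_ge_zero[of w] by linarith
  define d where "d = r / (norm w + 1)"
  have "u + t *\<^sub>R w \<in> U" if "\<bar>t\<bar> < d" for t
  proof -
    have "norm (t *\<^sub>R w) \<le> d * norm w" using that by (simp add: mult_right_mono)
    also have "\<dots> < r" using \<open>r > 0\<close> \<open>norm w + 1 > 0\<close> by (simp add: d_def field_simps)
    finally show ?thesis using \<open>ball u r \<subseteq> U\<close> by (auto simp: dist_norm)
  qed
  moreover have "d > 0" using \<open>r > 0\<close> \<open>norm w + 1 > 0\<close> by (simp add: d_def)
  ultimately show ?thesis using that by blast
qed

lemma Ck_on_SucD:
  assumes "Ck_on (Suc k) U f"
  shows "f differentiable_on U"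
    and "\<And>i. i \<in> Basis \<Longrightarrow> Ck_on k U (\<lambda>x. frechet_derivative f (at x) i)"
  using assms by simp_all

lemma smooth_on_partials:
  fixes Y :: "real^2 \<Rightarrow> real^3"
  assumes "smooth_on U Y" "u \<in> U"
  shows "(Y has_derivative frechet_derivative Y (at u)) (at u)"
    and "(pd Y i has_derivative frechet_derivative (pd Y i) (at u)) (at u)"
    and "isCont (pd2 Y i j) u"
proof -
  have "open U" and C3: "Ck_on (Suc (Suc (Suc 0))) U Y"
    using assms(1) unfolding smooth_on_def by blast+
  have C2: "Ck_on (Suc (Suc 0)) U (pd Y i)" for i
  proof -
    have "pd Y i = (\<lambda>x. frechet_derivative Y (at x) (axis i 1))" by (simp add: fun_eq_iff pd_def)
    then show ?thesis using Ck_on_SucD(2)[OF C3, of "axis i 1"] by simp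
  qed
  have C1: "Ck_on (Suc 0) U (pd2 Y i j)"
  proof -
    have "pd2 Y i j = (\<lambda>x. frechet_derivative (pd Y i) (at x) (axis j 1))"
      by (simp add: fun_eq_iff pd2_def)
    then show ?thesis using Ck_on_SucD(2)[OF C2, of "axis j 1"] by simp
  qed
  have "continuous_on U (pd2 Y i j)"
    using Ck_on_SucD(1)[OF C1] by (rule differentiable_imp_continuous_on)
  then show "isCont (pd2 Y i j) u"
    using assms(2) \<open>open U\<close> by (simp add: continuous_on_eq_continuous_at)
  show "(Y has_derivative frechet_derivative Y (at u)) (at u)"
    "(pd Y i has_derivative frechet_derivative (pd Y i) (at u)) (at u)"
    using Ck_on_SucD(1)[OF C3] Ck_on_SucD(1)[OF C2] assms(2) \<open>open U\<close>
    by (simp_all add: differentiable_on_eq_differentiable_at frechet_derivative_works[symmetric])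
qed

lemma pd2_commute:
  assumes "smooth_on U Y" "u \<in> U"
  shows "pd2 Y 1 2 u = pd2 Y 2 1 u"
proof -
  have "open U" using assms(1) by (simp add: smooth_on_def)
  note dY = smooth_on_partials(1)[OF assms(1)] and dP = smooth_on_partials(2)[OF assms(1)]
  have f: "((\<lambda>s. Y (y + s *\<^sub>R axis i 1) \<bullet> n) has_real_derivative pd Y i (y + t *\<^sub>R axis i 1) \<bullet> n) (at t)"
    if "y + t *\<^sub>R axis i 1 \<in> U" for y t i n
    using has_real_derivative_inner[OF has_vector_derivative_along_line[OF dY[OF that]]
        has_vector_derivative_const[of n]]
    by (simp add: pd_def)
  have P: "((\<lambda>s. pd Y i (y + s *\<^sub>R axis j 1) \<bullet> n) has_real_derivative pd2 Y i j (y + t *\<^sub>R axis j 1) \<bullet> n) (at t)"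
    if "y + t *\<^sub>R axis j 1 \<in> U" for y t i j n
    using has_real_derivative_inner[OF has_vector_derivative_along_line[OF dP[OF that]]
        has_vector_derivative_const[of n]]
    by (simp add: pd2_def)
  have "isCont (\<lambda>y. pd2 Y i j y \<bullet> n) u" for i j n
    using smooth_on_partials(3)[OF assms] by (auto intro!: continuous_intros)
  then have "pd2 Y 1 2 u \<bullet> n = pd2 Y 2 1 u \<bullet> n" for n
    using mixed_partials_eq[OF \<open>open U\<close> assms(2) f f P P] by blast
  then have "(pd2 Y 1 2 u - pd2 Y 2 1 u) \<bullet> (pd2 Y 1 2 u - pd2 Y 2 1 u) = 0"
    by (simp add: inner_diff_left)
  then show ?thesis by simp
qed

definition barrier :: "real \<Rightarrow> 'a::real_inner \<Rightarrow> real \<Rightarrow> 'a \<Rightarrow> real" where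
  "barrier s v \<epsilon> x = s * (x \<bullet> v) - \<epsilon> * ln (1 + x \<bullet> x)"

definition barrier_grad :: "real \<Rightarrow> 'a::real_inner \<Rightarrow> real \<Rightarrow> 'a \<Rightarrow> 'a" where
  "barrier_grad s v \<epsilon> x = s *\<^sub>R v - (2 * \<epsilon> / (1 + x \<bullet> x)) *\<^sub>R x"

lemma has_real_derivative_barrier:
  fixes c :: "real \<Rightarrow> 'a::real_inner"
  assumes "(c has_vector_derivative D) (at t)"
  shows "((\<lambda>t. barrier s v \<epsilon> (c t)) has_real_derivative barrier_grad s v \<epsilon> (c t) \<bullet> D) (at t)"
proof -
  have R: "((\<lambda>t. 1 + c t \<bullet> c t) has_real_derivative 2 * (c t \<bullet> D)) (at t)"
    by (rule DERIV_cong[OF DERIV_add[OF DERIV_const has_real_derivative_inner[OF assms assms]]])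
       (simp add: inner_commute)
  have "1 + c t \<bullet> c t > 0" by (simp add: add_pos_nonneg)
  then have "((\<lambda>t. ln (1 + c t \<bullet> c t)) has_real_derivative 2 * (c t \<bullet> D) / (1 + c t \<bullet> c t)) (at t)"
    using DERIV_chain2[OF DERIV_ln_divide R] by simp
  moreover have "((\<lambda>t. c t \<bullet> v) has_real_derivative D \<bullet> v) (at t)"
    using has_real_derivative_inner[OF assms has_vector_derivative_const] by simp
  ultimately have "((\<lambda>t. s * (c t \<bullet> v) - \<epsilon> * ln (1 + c t \<bullet> c t)) has_real_derivative
      s * (D \<bullet> v) - \<epsilon> * (2 * (c t \<bullet> D) / (1 + c t \<bullet> c t))) (at t)"
    by (intro DERIV_diff DERIV_cmult)
  then show ?thesis
    unfolding barrier_def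
    by (rule DERIV_cong) (simp add: barrier_grad_def inner_diff_left inner_commute algebra_simps)
qed

lemma has_vector_derivative_barrier_grad:
  fixes c :: "real \<Rightarrow> 'a::real_inner"
  assumes "(c has_vector_derivative D) (at t)"
  shows "((\<lambda>t. barrier_grad s v \<epsilon> (c t)) has_vector_derivative
           (4 * \<epsilon> * (c t \<bullet> D) / (1 + c t \<bullet> c t)\<^sup>2) *\<^sub>R c t - (2 * \<epsilon> / (1 + c t \<bullet> c t)) *\<^sub>R D) (at t)"
proof -
  have R: "((\<lambda>t. 1 + c t \<bullet> c t) has_real_derivative 2 * (c t \<bullet> D)) (at t)"
    by (rule DERIV_cong[OF DERIV_add[OF DERIV_const has_real_derivative_inner[OF assms assms]]])
       (simp add: inner_commute)
  have "1 + c t \<bullet> c t \<noteq> 0" using inner_ge_zero[of "c t"] by linarith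
  then have "((\<lambda>t. 2 * \<epsilon> / (1 + c t \<bullet> c t)) has_real_derivative
      - (4 * \<epsilon> * (c t \<bullet> D) / (1 + c t \<bullet> c t)\<^sup>2)) (at t)"
    by (rule DERIV_cong[OF DERIV_divide[OF DERIV_const R]]) (simp add: power2_eq_square)
  from has_vector_derivative_scaleR[OF this assms]
  have "((\<lambda>t. s *\<^sub>R v - (2 * \<epsilon> / (1 + c t \<bullet> c t)) *\<^sub>R c t) has_vector_derivative
      0 - ((2 * \<epsilon> / (1 + c t \<bullet> c t)) *\<^sub>R D - (4 * \<epsilon> * (c t \<bullet> D) / (1 + c t \<bullet> c t)\<^sup>2) *\<^sub>R c t)) (at t)"
    by (intro has_vector_derivative_diff has_vector_derivative_const) simp
  then show ?thesis by (simp add: barrier_grad_def)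
qed

lemma barrier_curve_local_max:
  fixes c D :: "real \<Rightarrow> 'a::real_inner"
  assumes "d > 0" "\<epsilon> \<ge> 0"
    and c: "\<And>t. \<bar>t\<bar> < d \<Longrightarrow> (c has_vector_derivative D t) (at t)"
    and D: "(D has_vector_derivative DD) (at 0)"
    and max: "\<And>t. \<bar>t\<bar> < d \<Longrightarrow> barrier s v \<epsilon> (c t) \<le> barrier s v \<epsilon> (c 0)"
  shows "barrier_grad s v \<epsilon> (c 0) \<bullet> D 0 = 0"
    and "barrier_grad s v \<epsilon> (c 0) \<bullet> DD \<le> 2 * \<epsilon> * (D 0 \<bullet> D 0)"
proof -
  define R where "R = 1 + c 0 \<bullet> c 0"
  have "R \<ge> 1" by (simp add: R_def)
  define G' where "G' = (4 * \<epsilon> * (c 0 \<bullet> D 0) / R\<^sup>2) *\<^sub>R c 0 - (2 * \<epsilon> / R) *\<^sub>R D 0"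
  have c0: "(c has_vector_derivative D 0) (at 0)" using c \<open>d > 0\<close> by simp
  have "((\<lambda>t. barrier_grad s v \<epsilon> (c t) \<bullet> D t) has_real_derivative
      G' \<bullet> D 0 + barrier_grad s v \<epsilon> (c 0) \<bullet> DD) (at 0)"
    using has_real_derivative_inner[OF has_vector_derivative_barrier_grad[OF c0] D]
    by (simp add: G'_def R_def)
  from DERIV_local_max_second_order[OF \<open>d > 0\<close> has_real_derivative_barrier[OF c] max this]
  have "barrier_grad s v \<epsilon> (c 0) \<bullet> D 0 = 0"
    and second: "G' \<bullet> D 0 + barrier_grad s v \<epsilon> (c 0) \<bullet> DD \<le> 0"
    by blast+
  then show "barrier_grad s v \<epsilon> (c 0) \<bullet> D 0 = 0" by blast
  have "G' \<bullet> D 0 = 4 * \<epsilon> * (c 0 \<bullet> D 0)\<^sup>2 / R\<^sup>2 - 2 * \<epsilon> * (D 0 \<bullet> D 0) / R"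
    by (simp add: G'_def inner_diff_left power2_eq_square)
  moreover have "4 * \<epsilon> * (c 0 \<bullet> D 0)\<^sup>2 / R\<^sup>2 \<ge> 0" using \<open>\<epsilon> \<ge> 0\<close> by simp
  moreover have "2 * \<epsilon> * (D 0 \<bullet> D 0) / R \<le> 2 * \<epsilon> * (D 0 \<bullet> D 0)"
    using divide_left_mono[of 1 R "2 * \<epsilon> * (D 0 \<bullet> D 0)"] \<open>R \<ge> 1\<close> \<open>\<epsilon> \<ge> 0\<close> by simp
  ultimately show "barrier_grad s v \<epsilon> (c 0) \<bullet> DD \<le> 2 * \<epsilon> * (D 0 \<bullet> D 0)"
    using second by linarith
qed

lemma barrier_surface_local_max:
  fixes Y :: "real^2 \<Rightarrow> real^3" and w :: "real^2"
  assumes "smooth_on U Y" "u0 \<in> U" "\<epsilon> \<ge> 0"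
    and max: "\<And>u. u \<in> U \<Longrightarrow> barrier s v \<epsilon> (Y u) \<le> barrier s v \<epsilon> (Y u0)"
  defines "D \<equiv> w$1 *\<^sub>R pd Y 1 u0 + w$2 *\<^sub>R pd Y 2 u0"
  shows "barrier_grad s v \<epsilon> (Y u0) \<bullet> D = 0"
    and "barrier_grad s v \<epsilon> (Y u0) \<bullet> (w$1 *\<^sub>R (w$1 *\<^sub>R pd2 Y 1 1 u0 + w$2 *\<^sub>R pd2 Y 1 2 u0)
           + w$2 *\<^sub>R (w$1 *\<^sub>R pd2 Y 2 1 u0 + w$2 *\<^sub>R pd2 Y 2 2 u0)) \<le> 2 * \<epsilon> * (D \<bullet> D)"
proof -
  have "open U" using assms(1) by (simp add: smooth_on_def)
  then obtain d where "d > 0" and line_in_U: "\<And>t. \<bar>t\<bar> < d \<Longrightarrow> u0 + t *\<^sub>R w \<in> U"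
    using assms(2) open_contains_line_segment by metis
  note dY = smooth_on_partials(1)[OF assms(1)] and dP = smooth_on_partials(2)[OF assms(1)]
  define Dt where "Dt t = w$1 *\<^sub>R pd Y 1 (u0 + t *\<^sub>R w) + w$2 *\<^sub>R pd Y 2 (u0 + t *\<^sub>R w)" for t
  have "((\<lambda>t. Y (u0 + t *\<^sub>R w)) has_vector_derivative Dt t) (at t)" if "\<bar>t\<bar> < d" for t
    unfolding Dt_def by (rule has_vector_derivative_line_pd[OF dY[OF line_in_U[OF that]]])
  moreover have "(Dt has_vector_derivative w$1 *\<^sub>R (w$1 *\<^sub>R pd2 Y 1 1 u0 + w$2 *\<^sub>R pd2 Y 1 2 u0)
           + w$2 *\<^sub>R (w$1 *\<^sub>R pd2 Y 2 1 u0 + w$2 *\<^sub>R pd2 Y 2 2 u0)) (at 0)"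
  proof -
    have pd_line: "((\<lambda>t. pd Y i (u0 + t *\<^sub>R w)) has_vector_derivative
           w$1 *\<^sub>R pd2 Y i 1 u0 + w$2 *\<^sub>R pd2 Y i 2 u0) (at 0)" for i
      using has_vector_derivative_line_pd[of "pd Y i" u0 0 w] dP[OF assms(2)]
      by (simp add: pd2_eq_pd_pd)
    then have "((\<lambda>t. a *\<^sub>R pd Y i (u0 + t *\<^sub>R w)) has_vector_derivative
           a *\<^sub>R (w$1 *\<^sub>R pd2 Y i 1 u0 + w$2 *\<^sub>R pd2 Y i 2 u0)) (at 0)" for a i
      using has_vector_derivative_scaleR[OF DERIV_const[of a] pd_line[of i]] by simp
    then show ?thesis
      unfolding Dt_def by (intro has_vector_derivative_add)
  qed
  moreover have "barrier s v \<epsilon> (Y (u0 + t *\<^sub>R w)) \<le> barrier s v \<epsilon> (Y (u0 + 0 *\<^sub>R w))"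
    if "\<bar>t\<bar> < d" for t
    using max[OF line_in_U[OF that]] by simp
  ultimately show "barrier_grad s v \<epsilon> (Y u0) \<bullet> D = 0"
    and "barrier_grad s v \<epsilon> (Y u0) \<bullet> (w$1 *\<^sub>R (w$1 *\<^sub>R pd2 Y 1 1 u0 + w$2 *\<^sub>R pd2 Y 1 2 u0)
           + w$2 *\<^sub>R (w$1 *\<^sub>R pd2 Y 2 1 u0 + w$2 *\<^sub>R pd2 Y 2 2 u0)) \<le> 2 * \<epsilon> * (D \<bullet> D)"
    using barrier_curve_local_max[OF \<open>d > 0\<close> \<open>\<epsilon> \<ge> 0\<close>, of "\<lambda>t. Y (u0 + t *\<^sub>R w)" Dt]
    by (simp_all add: Dt_def D_def)
qed

lemma orthogonal_frame_imp_parallel_normal: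
  fixes a b n z :: "real^3"
  assumes "n \<bullet> a = 0" "n \<bullet> b = 0" "n \<bullet> n = 1" "z \<bullet> a = 0" "z \<bullet> b = 0"
    and "(a \<bullet> a) * (b \<bullet> b) - (a \<bullet> b)\<^sup>2 > 0"
  shows "z = (z \<bullet> n) *\<^sub>R n"
proof -
  define p where "p = cross3 a b"
  have "p \<bullet> p + (a \<bullet> b)\<^sup>2 = (a \<bullet> a) * (b \<bullet> b)"
    using norm_cross_dot[of a b] by (simp add: p_def power2_norm_eq_inner power_mult_distrib)
  with assms(6) have "p \<bullet> p > 0" by linarith
  have parallel: "y = ((p \<bullet> y) / (p \<bullet> p)) *\<^sub>R p" if "y \<bullet> a = 0" "y \<bullet> b = 0" for y
  proof -
    have "cross3 p y = (a \<bullet> y) *\<^sub>R b - (b \<bullet> y) *\<^sub>R a"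
      by (simp add: p_def cross3_simps forall_3)
    then have "cross3 p y = 0"
      using that by (simp add: inner_commute)
    moreover have "cross3 p (cross3 p y) = (p \<bullet> y) *\<^sub>R p - (p \<bullet> p) *\<^sub>R y"
      by (simp add: cross3_simps forall_3)
    ultimately have "(p \<bullet> p) *\<^sub>R y = (p \<bullet> y) *\<^sub>R p" by simp
    then have "inverse (p \<bullet> p) *\<^sub>R (p \<bullet> p) *\<^sub>R y = inverse (p \<bullet> p) *\<^sub>R (p \<bullet> y) *\<^sub>R p"
      by simp
    then show ?thesis using \<open>p \<bullet> p > 0\<close> by (simp add: divide_inverse_commute)
  qed
  define \<alpha> where "\<alpha> = (p \<bullet> n) / (p \<bullet> p)"
  define \<beta> where "\<beta> = (p \<bullet> z) / (p \<bullet> p)"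
  have n: "n = \<alpha> *\<^sub>R p" and z: "z = \<beta> *\<^sub>R p"
    using parallel[of n] parallel[of z] assms(1,2,4,5) by (simp_all add: \<alpha>_def \<beta>_def inner_commute)
  have "n \<bullet> n = \<alpha> * \<alpha> * (p \<bullet> p)" by (subst (1 2) n) (simp add: algebra_simps)
  with assms(3) have "\<alpha> * \<alpha> * (p \<bullet> p) = 1" by simp
  then have "(z \<bullet> n) *\<^sub>R n = \<beta> *\<^sub>R p"
    by (subst (1 2) n, subst z) (simp add: algebra_simps)
  with z show ?thesis by simp
qed

lemma inj_linear_gram_det_pos:
  fixes L :: "real^2 \<Rightarrow> 'a::real_inner"
  assumes "linear L" "inj L"
  defines "a \<equiv> L (axis 1 1)" and "b \<equiv> L (axis 2 1)"
  shows "b \<bullet> b > 0" and "(a \<bullet> a) * (b \<bullet> b) - (a \<bullet> b)\<^sup>2 > 0"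
proof -
  have nonzero: "L x \<noteq> 0" if "x \<noteq> 0" for x
    using assms(2) that linear_0[OF assms(1)] by (metis injD)
  then show "b \<bullet> b > 0" by (simp add: b_def axis_eq_0_iff)
  have "(b \<bullet> b) *\<^sub>R axis 1 1 - (a \<bullet> b) *\<^sub>R axis 2 1 \<noteq> (0::real^2)"
    using \<open>b \<bullet> b > 0\<close> by (auto simp: vec_eq_iff axis_def forall_2)
  then have "L ((b \<bullet> b) *\<^sub>R axis 1 1 - (a \<bullet> b) *\<^sub>R axis 2 1) \<noteq> 0" by (rule nonzero)
  then have "(b \<bullet> b) *\<^sub>R a - (a \<bullet> b) *\<^sub>R b \<noteq> 0"
    by (simp add: a_def b_def linear_diff[OF assms(1)] linear_scale[OF assms(1)])
  then have "0 < ((b \<bullet> b) *\<^sub>R a - (a \<bullet> b) *\<^sub>R b) \<bullet> ((b \<bullet> b) *\<^sub>R a - (a \<bullet> b) *\<^sub>R b)" by simp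
  also have "\<dots> = (b \<bullet> b) * ((a \<bullet> a) * (b \<bullet> b) - (a \<bullet> b)\<^sup>2)"
    by (simp add: inner_diff_left inner_diff_right inner_commute power2_eq_square algebra_simps)
  finally show "(a \<bullet> a) * (b \<bullet> b) - (a \<bullet> b)\<^sup>2 > 0"
    using \<open>b \<bullet> b > 0\<close> by (simp add: zero_less_mult_iff)
qed

text \<open>The left-hand side is the trace of the inverse of g times h.\<close>

lemma trace_le_of_quadratic_form_le:
  fixes h11 h12 h22 g11 g12 g22 c :: real
  assumes form: "\<And>x y. x * x * h11 + 2 * x * y * h12 + y * y * h22
                   \<le> c * (x * x * g11 + 2 * x * y * g12 + y * y * g22)"
    and "g22 > 0" "g11 * g22 - g12\<^sup>2 > 0"
  shows "(h11 * g22 - 2 * h12 * g12 + h22 * g11) / (g11 * g22 - g12\<^sup>2) \<le> 2 * c"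
proof -
  define det where "det = g11 * g22 - g12\<^sup>2"
  have "det > 0" using assms(3) by (simp add: det_def)
  have "h22 * det \<le> c * g22 * det"
    using form[of 0 1] \<open>det > 0\<close> by (simp add: det_def mult_right_mono)
  moreover have "g22 * g22 * h11 - 2 * g22 * g12 * h12 + g12 * g12 * h22 \<le> c * g22 * det"
    using form[of g22 "- g12"] by (simp add: det_def power2_eq_square algebra_simps)
  ultimately have "g22 * (h11 * g22 - 2 * h12 * g12 + h22 * g11) \<le> g22 * (2 * c * det)"
    by (simp add: det_def power2_eq_square algebra_simps)
  then show ?thesis
    using \<open>g22 > 0\<close> \<open>det > 0\<close> by (simp add: det_def divide_le_eq)
qed

lemma barrier_max_mean_curv_bound:
  fixes Y :: "real^2 \<Rightarrow> real^3" and N0 :: "real^3"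
  assumes Y: "smooth_on U Y" "u0 \<in> U" "inj (frechet_derivative Y (at u0))"
    and N0: "N0 \<bullet> N0 = 1" "\<And>i. pd Y i u0 \<bullet> N0 = 0"
    and "\<epsilon> \<ge> 0"
    and max: "\<And>u. u \<in> U \<Longrightarrow> barrier s v \<epsilon> (Y u) \<le> barrier s v \<epsilon> (Y u0)"
  defines "z \<equiv> barrier_grad s v \<epsilon> (Y u0)"
  shows "z = (z \<bullet> N0) *\<^sub>R N0" and "(z \<bullet> N0) * mean_curv_trace Y N0 u0 \<le> 4 * \<epsilon>"
proof -
  note first = barrier_surface_local_max(1)[OF Y(1,2) \<open>\<epsilon> \<ge> 0\<close> max]
  note second = barrier_surface_local_max(2)[OF Y(1,2) \<open>\<epsilon> \<ge> 0\<close> max]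
  define g11 where "g11 = pd Y 1 u0 \<bullet> pd Y 1 u0"
  define g12 where "g12 = pd Y 1 u0 \<bullet> pd Y 2 u0"
  define g22 where "g22 = pd Y 2 u0 \<bullet> pd Y 2 u0"
  have "linear (frechet_derivative Y (at u0))"
    using smooth_on_partials(1)[OF Y(1,2)] by (rule has_derivative_linear)
  from inj_linear_gram_det_pos[OF this Y(3)]
  have "g22 > 0" and det: "g11 * g22 - g12\<^sup>2 > 0"
    by (simp_all add: g11_def g12_def g22_def pd_def)
  have "z \<bullet> pd Y 1 u0 = 0" "z \<bullet> pd Y 2 u0 = 0"
    using first[of "axis 1 1"] first[of "axis 2 1"] by (simp_all add: z_def axis_def)
  then show z_normal: "z = (z \<bullet> N0) *\<^sub>R N0"
    using orthogonal_frame_imp_parallel_normal[of N0 "pd Y 1 u0" "pd Y 2 u0" z] N0 det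
    by (simp add: g11_def g12_def g22_def inner_commute)
  define lam where "lam = z \<bullet> N0"
  define h11 where "h11 = pd2 Y 1 1 u0 \<bullet> N0"
  define h12 where "h12 = pd2 Y 1 2 u0 \<bullet> N0"
  define h22 where "h22 = pd2 Y 2 2 u0 \<bullet> N0"
  have "x * x * (lam * h11) + 2 * x * y * (lam * h12) + y * y * (lam * h22)
      \<le> 2 * \<epsilon> * (x * x * g11 + 2 * x * y * g12 + y * y * g22)" for x y
  proof -
    define D where "D = x *\<^sub>R pd Y 1 u0 + y *\<^sub>R pd Y 2 u0"
    define DD where "DD = x *\<^sub>R (x *\<^sub>R pd2 Y 1 1 u0 + y *\<^sub>R pd2 Y 1 2 u0)
                          + y *\<^sub>R (x *\<^sub>R pd2 Y 2 1 u0 + y *\<^sub>R pd2 Y 2 2 u0)"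
    have "z \<bullet> DD \<le> 2 * \<epsilon> * (D \<bullet> D)"
      using second[of "vector [x, y]"] by (simp add: z_def D_def DD_def)
    moreover have "z \<bullet> DD = lam * (N0 \<bullet> DD)"
      by (subst z_normal) (simp add: lam_def)
    moreover have "N0 \<bullet> DD = x * x * h11 + 2 * x * y * h12 + y * y * h22"
      using pd2_commute[OF Y(1,2)]
      by (simp add: DD_def h11_def h12_def h22_def inner_add_right inner_commute[of N0])
        (simp add: algebra_simps)
    moreover have "D \<bullet> D = x * x * g11 + 2 * x * y * g12 + y * y * g22"
      by (simp add: D_def g11_def g12_def g22_def inner_add_left inner_add_right inner_commute algebra_simps)
    ultimately show ?thesis by (simp add: algebra_simps)
  qed
  from trace_le_of_quadratic_form_le[OF this \<open>g22 > 0\<close> det]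
  show "(z \<bullet> N0) * mean_curv_trace Y N0 u0 \<le> 4 * \<epsilon>"
    by (simp add: mean_curv_trace_def Let_def lam_def h11_def h12_def h22_def g11_def g12_def g22_def
        algebra_simps add_divide_distrib diff_divide_distrib)
qed

lemma continuous_on_barrier: "continuous_on UNIV (barrier s v \<epsilon>)"
proof -
  have "1 + x \<bullet> x \<noteq> 0" for x :: 'a
    using inner_ge_zero[of x] by linarith
  then show ?thesis
    unfolding barrier_def[abs_def] by (intro continuous_intros) auto
qed

lemma barrier_superlevel_bounded:
  assumes "\<epsilon> > 0" "s * (x \<bullet> v) \<le> 0" "c \<le> barrier s v \<epsilon> x"
  shows "norm x \<le> sqrt (exp (- c / \<epsilon>))"
proof -
  have "c \<le> - \<epsilon> * ln (1 + x \<bullet> x)" using assms(2,3) by (simp add: barrier_def)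
  then have "ln (1 + x \<bullet> x) \<le> - c / \<epsilon>" using \<open>\<epsilon> > 0\<close> by (simp add: field_simps)
  moreover have "1 + x \<bullet> x > 0" by (simp add: add_pos_nonneg)
  ultimately have "1 + (norm x)\<^sup>2 \<le> exp (- c / \<epsilon>)"
    unfolding power2_norm_eq_inner by (metis exp_le_cancel_iff exp_ln)
  then show ?thesis by (intro real_le_rsqrt) simp
qed

lemma proper_immersion_attains_max:
  fixes F :: "'m \<Rightarrow> real"
  assumes "proper_immersion M X" "continuous_map M euclidean F" "topspace M \<noteq> {}"
    and bounded: "\<And>c. \<exists>R. \<forall>p\<in>topspace M. c \<le> F p \<longrightarrow> norm (X p) \<le> R"
  obtains p where "p \<in> topspace M" "\<And>q. q \<in> topspace M \<Longrightarrow> F q \<le> F p"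
proof -
  obtain p0 where "p0 \<in> topspace M" using assms(3) by blast
  obtain R where R: "\<And>p. p \<in> topspace M \<Longrightarrow> F p0 \<le> F p \<Longrightarrow> norm (X p) \<le> R"
    using bounded[of "F p0"] by blast
  define T where "T = {p \<in> topspace M. X p \<in> cball 0 R}"
  have "compactin M T" using assms(1) compact_cball unfolding proper_immersion_def T_def by blast
  then have "compact (F ` T)" using image_compactin[OF _ assms(2)] by simp
  moreover have "p0 \<in> T" using \<open>p0 \<in> topspace M\<close> R by (simp add: T_def)
  ultimately obtain p where "p \<in> T" and p_max: "\<And>q. q \<in> T \<Longrightarrow> F q \<le> F p"
    using compact_attains_sup[of "F ` T"] by auto
  show ?thesis
  proof (rule that)
    show "p \<in> topspace M" using \<open>p \<in> T\<close> by (simp add: T_def)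
    show "F q \<le> F p" if "q \<in> topspace M" for q
    proof (cases "q \<in> T")
      case False
      then have "F q < F p0" using R that by (force simp: T_def)
      then show ?thesis using p_max[OF \<open>p0 \<in> T\<close>] by simp
    qed (rule p_max)
  qed
qed

lemma barrier_attains_max_in_halfspace:
  assumes "proper_immersion M X" "continuous_map M euclidean X" "topspace M \<noteq> {}" "\<epsilon> > 0"
    and halfspace: "\<And>p. p \<in> topspace M \<Longrightarrow> s * (X p \<bullet> v) \<le> 0"
  obtains p where "p \<in> topspace M"
    "\<And>q. q \<in> topspace M \<Longrightarrow> barrier s v \<epsilon> (X q) \<le> barrier s v \<epsilon> (X p)"
proof (rule proper_immersion_attains_max[OF assms(1) _ assms(3)])
  show "continuous_map M euclidean (\<lambda>p. barrier s v \<epsilon> (X p))"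
    using continuous_map_compose[OF assms(2), of euclidean "barrier s v \<epsilon>"]
    by (simp add: o_def continuous_on_barrier)
  show "\<exists>R. \<forall>p\<in>topspace M. c \<le> barrier s v \<epsilon> (X p) \<longrightarrow> norm (X p) \<le> R" for c
    using barrier_superlevel_bounded[OF \<open>\<epsilon> > 0\<close> halfspace] by blast
qed (blast intro: that)

lemma diffeomorphism_R_deriv:
  fixes \<phi> :: "real \<Rightarrow> real"
  assumes "diffeomorphism_R \<phi>"
  shows "continuous_on UNIV (deriv \<phi>)" and "deriv \<phi> x \<noteq> 0"
proof -
  have "bij \<phi>" and C: "Ck_on (Suc (Suc 0)) UNIV \<phi>" and C': "Ck_on (Suc 0) UNIV (inv \<phi>)"
    using assms unfolding diffeomorphism_R_def smooth_on_def by blast+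
  have \<phi>_deriv: "(\<phi> has_real_derivative deriv \<phi> x) (at x)" for x
    using Ck_on_SucD(1)[OF C]
    by (simp add: DERIV_deriv_iff_real_differentiable differentiable_on_eq_differentiable_at)
  have "frechet_derivative \<phi> (at x) = (*) (deriv \<phi> x)" for x
    using frechet_derivative_at[OF \<phi>_deriv[of x, unfolded has_field_derivative_def]] by simp
  then have "(\<lambda>x. frechet_derivative \<phi> (at x) 1) = deriv \<phi>" by auto
  moreover have "(\<lambda>x. frechet_derivative \<phi> (at x) 1) differentiable_on UNIV"
    using Ck_on_SucD(1)[OF Ck_on_SucD(2)[OF C]] by simp
  ultimately show "continuous_on UNIV (deriv \<phi>)"
    by (metis differentiable_imp_continuous_on)
  have "((\<lambda>y. \<phi> (inv \<phi> y)) has_real_derivative deriv \<phi> x * deriv (inv \<phi>) (\<phi> x)) (at (\<phi> x))"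
    using \<phi>_deriv[of x] Ck_on_SucD(1)[OF C'] \<open>bij \<phi>\<close>
    by (intro DERIV_chain2)
      (simp_all add: DERIV_deriv_iff_real_differentiable differentiable_on_eq_differentiable_at bij_is_inj)
  moreover have "(\<lambda>y. \<phi> (inv \<phi> y)) = id"
    using \<open>bij \<phi>\<close> by (simp add: fun_eq_iff bij_is_surj surj_f_inv_f)
  ultimately have "deriv \<phi> x * deriv (inv \<phi>) (\<phi> x) = 1"
    using DERIV_ident DERIV_unique by (metis eq_id_iff)
  then show "deriv \<phi> x \<noteq> 0" by auto
qed

lemma sgn_mult_eq_abs_if_nonvanishing:
  fixes f :: "real \<Rightarrow> real"
  assumes "continuous_on UNIV f" "\<And>x. f x \<noteq> 0"
  shows "sgn (f 0) * f t = \<bar>f t\<bar>"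
proof -
  have "connected (range f)" using assms(1) connected_continuous_image by blast
  moreover have "0 \<notin> range f" using assms(2) by auto
  ultimately have "\<not> (f t < 0 \<and> 0 < f 0)" "\<not> (f 0 < 0 \<and> 0 < f t)"
    unfolding connected_iff_interval by (metis UNIV_I image_eqI less_imp_le)+
  then show ?thesis
    using assms(2)[of 0] assms(2)[of t] by (cases "f 0 > 0"; cases "f t > 0") (auto simp: sgn_if)
qed

lemma oriented_immersed_surface_continuous:
  assumes "oriented_immersed_surface M X N"
  shows "continuous_map M euclidean X"
proof -
  have "openin M {p \<in> topspace M. X p \<in> W}" if "open W" for W
  proof (subst openin_subopen, intro ballI)
    fix p assume p: "p \<in> {p \<in> topspace M. X p \<in> W}"
    then obtain U \<psi> where "local_param M X U \<psi>" "p \<in> \<psi> ` U"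
      using assms by (auto simp: oriented_immersed_surface_def)
    then have op: "openin M (\<psi> ` U)"
      and hm: "homeomorphic_map (top_of_set U) (subtopology M (\<psi> ` U)) \<psi>"
      and "continuous_on U (X \<circ> \<psi>)"
      by (auto simp: local_param_def smooth_on_def dest: spec[of _ 0])
    obtain g where g: "homeomorphic_maps (top_of_set U) (subtopology M (\<psi> ` U)) \<psi> g"
      using hm homeomorphic_map_maps by blast
    have "continuous_map (subtopology M (\<psi> ` U)) euclidean ((X \<circ> \<psi>) \<circ> g)"
      using g \<open>continuous_on U (X \<circ> \<psi>)\<close>
      by (auto simp: homeomorphic_maps_def intro: continuous_map_compose)
    then have "continuous_map (subtopology M (\<psi> ` U)) euclidean X"
      by (rule continuous_map_eq) (use g in \<open>auto simp: homeomorphic_maps_def\<close>)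
    then have "openin (subtopology M (\<psi> ` U)) {q \<in> topspace (subtopology M (\<psi> ` U)). X q \<in> W}"
      using \<open>open W\<close> by (simp add: continuous_map_def)
    then have "openin M {q \<in> topspace (subtopology M (\<psi> ` U)). X q \<in> W}"
      using op openin_trans_full by blast
    moreover have "p \<in> {q \<in> topspace (subtopology M (\<psi> ` U)). X q \<in> W}"
      using p \<open>p \<in> \<psi> ` U\<close> by auto
    ultimately show "\<exists>T. openin M T \<and> p \<in> T \<and> T \<subseteq> {p \<in> topspace M. X p \<in> W}"
      by fastforce
  qed
  then show ?thesis by (auto simp: continuous_map_def)
qed

lemma nonvanishing_bounded_below_off_compact:
  fixes f :: "real \<Rightarrow> real" and X :: "'m \<Rightarrow> real^3"
  assumes "continuous_on UNIV f" "\<And>t. f t \<noteq> 0" "continuous_map M euclidean X"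
    and "compactin M K" "\<xi> > 0" "\<And>p. p \<in> topspace M - K \<Longrightarrow> \<bar>f (height (X p))\<bar> > \<xi>"
  obtains m where "m > 0" "\<And>p. p \<in> topspace M \<Longrightarrow> m \<le> \<bar>f (height (X p))\<bar>"
proof -
  have "continuous_on UNIV (\<lambda>x. \<bar>f (height x)\<bar>)"
    unfolding height_def
    by (intro continuous_intros continuous_on_compose2[OF assms(1)]) auto
  then have "continuous_map M euclidean (\<lambda>p. \<bar>f (height (X p))\<bar>)"
    using continuous_map_compose[OF assms(3), of euclidean "\<lambda>x. \<bar>f (height x)\<bar>"] by (simp add: o_def)
  then have "compactin euclidean ((\<lambda>p. \<bar>f (height (X p))\<bar>) ` K)"
    by (rule image_compactin[OF assms(4)])
  then have "compact ((\<lambda>p. \<bar>f (height (X p))\<bar>) ` K)" by simp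
  then have "compact (insert \<xi> ((\<lambda>p. \<bar>f (height (X p))\<bar>) ` K))" by (rule compact_insert)
  then obtain m where m: "m \<in> insert \<xi> ((\<lambda>p. \<bar>f (height (X p))\<bar>) ` K)"
    and m_le: "\<And>y. y \<in> insert \<xi> ((\<lambda>p. \<bar>f (height (X p))\<bar>) ` K) \<Longrightarrow> m \<le> y"
    using compact_attains_inf[of "insert \<xi> _"] by blast
  show ?thesis
  proof (rule that)
    show "m > 0" using m \<open>\<xi> > 0\<close> assms(2) by auto
    show "m \<le> \<bar>f (height (X p))\<bar>" if "p \<in> topspace M" for p
      using m_le[of \<xi>] m_le[of "\<bar>f (height (X p))\<bar>"] assms(6)[of p] that by (cases "p \<in> K") auto
  qed
qed

lemma phi_minimal_barrier_max_bound:
  assumes "phi_minimal \<phi> M X N" "p \<in> topspace M" "\<epsilon> \<ge> 0"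
    and max: "\<And>q. q \<in> topspace M \<Longrightarrow> barrier s v \<epsilon> (X q) \<le> barrier s v \<epsilon> (X p)"
  shows "deriv \<phi> (height (X p)) * (barrier_grad s v \<epsilon> (X p) \<bullet> axis 3 1) \<le> 4 * \<epsilon>"
proof -
  have surf: "oriented_immersed_surface M X N" using assms(1) by (simp add: phi_minimal_def)
  then obtain U \<psi> u0 where lp: "local_param M X U \<psi>" and "u0 \<in> U" and p: "p = \<psi> u0"
    using assms(2) by (auto simp: oriented_immersed_surface_def)
  then have "\<psi> ` U \<subseteq> topspace M" by (auto simp: local_param_def dest: openin_subset)
  define n where "n = N (\<psi> u0)"
  define z where "z = barrier_grad s v \<epsilon> ((X \<circ> \<psi>) u0)"
  have "n \<bullet> n = 1"
    using surf \<open>\<psi> ` U \<subseteq> topspace M\<close> \<open>u0 \<in> U\<close>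
    by (auto simp: oriented_immersed_surface_def n_def power2_norm_eq_inner[symmetric])
  moreover have "pd (X \<circ> \<psi>) i u0 \<bullet> n = 0" for i
    using surf lp \<open>u0 \<in> U\<close> by (auto simp: oriented_immersed_surface_def n_def)
  moreover have "barrier s v \<epsilon> ((X \<circ> \<psi>) u) \<le> barrier s v \<epsilon> ((X \<circ> \<psi>) u0)" if "u \<in> U" for u
    using max[of "\<psi> u"] \<open>\<psi> ` U \<subseteq> topspace M\<close> that p by auto
  ultimately have z_normal: "z = (z \<bullet> n) *\<^sub>R n"
    and bound: "(z \<bullet> n) * mean_curv_trace (X \<circ> \<psi>) n u0 \<le> 4 * \<epsilon>"
    using barrier_max_mean_curv_bound[of U "X \<circ> \<psi>" u0 n \<epsilon> s v] lp \<open>u0 \<in> U\<close> \<open>\<epsilon> \<ge> 0\<close>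
    by (simp_all add: local_param_def z_def)
  have "z \<bullet> axis 3 1 = (z \<bullet> n) * (n \<bullet> axis 3 1)"
    using arg_cong[OF z_normal, of "\<lambda>x. x \<bullet> axis 3 1"] by simp
  moreover have "mean_curv_trace (X \<circ> \<psi>) n u0 = deriv \<phi> (height (X p)) * (n \<bullet> axis 3 1)"
    using assms(1) lp \<open>u0 \<in> U\<close> by (simp add: phi_minimal_def n_def p)
  ultimately have "deriv \<phi> (height (X p)) * (z \<bullet> axis 3 1) = (z \<bullet> n) * mean_curv_trace (X \<circ> \<psi>) n u0"
    by (simp add: algebra_simps)
  with bound show ?thesis by (simp add: z_def p)
qed

lemma barrier_grad_vertical_estimate:
  fixes x v :: "real^3"
  assumes "s * k = \<bar>k\<bar>" "\<bar>k\<bar> \<le> C * (1 + \<bar>height x\<bar>)" "C \<ge> 0" "\<epsilon> \<ge> 0"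
    and "k * (barrier_grad s v \<epsilon> x \<bullet> axis 3 1) \<le> 4 * \<epsilon>"
  shows "\<bar>k\<bar> * (v \<bullet> axis 3 1) \<le> (4 + 3 * C) * \<epsilon>"
proof -
  define \<mu> where "\<mu> = height x"
  define r where "r = x \<bullet> x"
  have "\<mu>\<^sup>2 \<le> r"
    using Cauchy_Schwarz_ineq[of x "axis 3 1"] by (simp add: \<mu>_def r_def height_def)
  then have "r \<ge> 0" by (meson order_trans zero_le_power2)
  have "2 * \<bar>\<mu>\<bar> \<le> 1 + \<mu>\<^sup>2"
    using sum_power2_ge_zero[of "\<bar>\<mu>\<bar> - 1" 0] by (simp add: power2_eq_square algebra_simps)
  then have "(1 + \<bar>\<mu>\<bar>) * \<bar>\<mu>\<bar> \<le> 3 / 2 * (1 + r)"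
    using \<open>\<mu>\<^sup>2 \<le> r\<close> by (simp add: power2_eq_square algebra_simps)
  have "k * \<mu> \<le> \<bar>k\<bar> * \<bar>\<mu>\<bar>" by (simp add: abs_mult[symmetric])
  also have "\<dots> \<le> C * ((1 + \<bar>\<mu>\<bar>) * \<bar>\<mu>\<bar>)"
    using mult_right_mono[OF assms(2) abs_ge_zero] by (simp add: \<mu>_def mult.assoc)
  also have "\<dots> \<le> C * (3 / 2 * (1 + r))"
    using \<open>(1 + \<bar>\<mu>\<bar>) * \<bar>\<mu>\<bar> \<le> _\<close> \<open>C \<ge> 0\<close> by (rule mult_left_mono)
  finally have "k * \<mu> / (1 + r) \<le> 3 / 2 * C"
    using \<open>r \<ge> 0\<close> by (simp add: divide_le_eq algebra_simps)
  then have "2 * \<epsilon> * (k * \<mu> / (1 + r)) \<le> 2 * \<epsilon> * (3 / 2 * C)"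
    using \<open>\<epsilon> \<ge> 0\<close> by (intro mult_left_mono) auto
  have split: "k * (s * (v \<bullet> axis 3 1) - 2 * \<epsilon> * \<mu> / (1 + r))
      = \<bar>k\<bar> * (v \<bullet> axis 3 1) - 2 * \<epsilon> * (k * \<mu> / (1 + r))"
    using assms(1) by (simp add: right_diff_distrib mult_ac)
  have "\<bar>k\<bar> * (v \<bullet> axis 3 1)
      = k * (s * (v \<bullet> axis 3 1) - 2 * \<epsilon> * \<mu> / (1 + r)) + 2 * \<epsilon> * (k * \<mu> / (1 + r))"
    by (simp add: split)
  also have "\<dots> \<le> 4 * \<epsilon> + 2 * \<epsilon> * (3 / 2 * C)"
    using assms(5) \<open>2 * \<epsilon> * (k * \<mu> / (1 + r)) \<le> _\<close>
    by (intro add_mono) (simp_all add: barrier_grad_def height_def inner_diff_left \<mu>_def r_def)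
  also have "\<dots> = (4 + 3 * C) * \<epsilon>" by (simp add: algebra_simps)
  finally show ?thesis .
qed

theorem theoremA:
  fixes \<phi> :: "real \<Rightarrow> real" and M :: "'m topology" and X N :: "'m \<Rightarrow> real^3" and \<xi> :: real
  assumes "diffeomorphism_R \<phi>"
    and "at_most_quadratic_growth \<phi>"
    and "phi_minimal \<phi> M X N"
    and "proper_immersion M X"
    and "\<xi> > 0"
    and "\<exists>K. compactin M K \<and> (\<forall>p \<in> topspace M - K. \<bar>deriv \<phi> (height (X p))\<bar> > \<xi>)"
  shows "\<forall>v::real^3. v \<bullet> axis 3 1 > 0 \<longrightarrow>
           \<not> (X ` topspace M \<subseteq> {x. sgn (deriv \<phi> 0) * (x \<bullet> v) \<le> 0})"
proof (intro allI impI notI)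
  fix v :: "real^3"
  assume "v \<bullet> axis 3 1 > 0" and halfspace: "X ` topspace M \<subseteq> {x. sgn (deriv \<phi> 0) * (x \<bullet> v) \<le> 0}"
  define s where "s = sgn (deriv \<phi> 0)"
  obtain C where "C > 0" and C: "\<And>t. \<bar>deriv \<phi> t\<bar> \<le> C * (1 + \<bar>t\<bar>)"
    using assms(2) by (auto simp: at_most_quadratic_growth_def)
  have surf: "oriented_immersed_surface M X N" using assms(3) by (simp add: phi_minimal_def)
  note X_cont = oriented_immersed_surface_continuous[OF surf]
  obtain m where "m > 0" and m: "\<And>p. p \<in> topspace M \<Longrightarrow> m \<le> \<bar>deriv \<phi> (height (X p))\<bar>"
    using nonvanishing_bounded_below_off_compact[OF diffeomorphism_R_deriv[OF assms(1)] X_cont _ assms(5)]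
      assms(6) by blast
  define \<epsilon> where "\<epsilon> = m * (v \<bullet> axis 3 1) / (2 * (4 + 3 * C))"
  have "\<epsilon> > 0" using \<open>m > 0\<close> \<open>v \<bullet> axis 3 1 > 0\<close> \<open>C > 0\<close> by (simp add: \<epsilon>_def)
  obtain p where "p \<in> topspace M"
    and max: "\<And>q. q \<in> topspace M \<Longrightarrow> barrier s v \<epsilon> (X q) \<le> barrier s v \<epsilon> (X p)"
    using barrier_attains_max_in_halfspace[OF assms(4) X_cont _ \<open>\<epsilon> > 0\<close>, of s v] surf halfspace
    by (auto simp: oriented_immersed_surface_def s_def)
  have "\<bar>deriv \<phi> (height (X p))\<bar> * (v \<bullet> axis 3 1) \<le> (4 + 3 * C) * \<epsilon>"
    using phi_minimal_barrier_max_bound[OF assms(3) \<open>p \<in> topspace M\<close> _ max] \<open>\<epsilon> > 0\<close> C \<open>C > 0\<close>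
      sgn_mult_eq_abs_if_nonvanishing[OF diffeomorphism_R_deriv[OF assms(1)]]
    by (intro barrier_grad_vertical_estimate[where s = s]) (auto simp: s_def)
  moreover have "m * (v \<bullet> axis 3 1) \<le> \<bar>deriv \<phi> (height (X p))\<bar> * (v \<bullet> axis 3 1)"
    using m[OF \<open>p \<in> topspace M\<close>] \<open>v \<bullet> axis 3 1 > 0\<close> by simp
  moreover have "(4 + 3 * C) * \<epsilon> = m * (v \<bullet> axis 3 1) / 2"
    using \<open>C > 0\<close> by (simp add: \<epsilon>_def field_simps)
  ultimately show False using \<open>m > 0\<close> \<open>v \<bullet> axis 3 1 > 0\<close> by simp
qed

end
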